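(* Let $\alpha_1\ge\alpha_2\ge\cdots\ge\alpha_{14}\ge0$ be real numbers with $\alpha_1+\cdots+\alpha_{14}=1$ and $\alpha_1+\alpha_2<\frac12$, and suppose that no sub-sum $\sum_{i\in\mathcal{S}}\alpha_i$, for $\mathcal{S}\subseteq\{1,\dots,14\}$, lies in $[\frac{5}{12},\frac{7}{12}]$. Then $\alpha_5>\frac16$ and \[ \alpha_1+\alpha_2+\alpha_6+\alpha_7+\cdots+\alpha_{14}<\frac{5}{12}. \] *)

theory Defs
  imports Main "HOL.Real"
begin

end

theory Submission
  imports Defs
begin

text \<open>Since no sub-sum lies in the gap \<open>[5/12, 7/12]\<close> of width \<open>1/6\<close>, a sub-sum below
\<open>5/12\<close> stays below \<open>5/12\<close> when terms of size at most \<open>1/6\<close> are added to it one at a time.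
Starting from \<open>\<alpha>\<^sub>1 + \<alpha>\<^sub>2\<close>, if \<open>\<alpha>\<^sub>5 \<le> 1/6\<close> this would put everything except \<open>\<alpha>\<^sub>3 + \<alpha>\<^sub>4 \<le> \<alpha>\<^sub>1 + \<alpha>\<^sub>2\<close>
below \<open>5/12\<close>, leaving total mass less than \<open>5/6\<close>. Hence \<open>\<alpha>\<^sub>3, \<alpha>\<^sub>4, \<alpha>\<^sub>5 > 1/6\<close>, so the complementary
sum in the second claim is below \<open>1/2\<close>, and the gap forces it below \<open>5/12\<close>.\<close>

lemma sum_stays_below_gap:
  fixes f :: "'a \<Rightarrow> real"
  assumes "finite U"
    and gap: "\<And>S. S \<subseteq> U \<Longrightarrow> \<not> (l \<le> sum f S \<and> sum f S \<le> h)"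
    and "A \<subseteq> U" "B \<subseteq> U"
    and below: "sum f A < l"
    and small: "\<And>x. x \<in> B \<Longrightarrow> f x \<le> h - l"
  shows "sum f (A \<union> B) < l"
proof -
  have "finite B" using \<open>B \<subseteq> U\<close> \<open>finite U\<close> by (rule finite_subset)
  then show ?thesis using \<open>B \<subseteq> U\<close> small
  proof (induction B rule: finite_induct)
    case empty
    show ?case using below by simp
  next
    case (insert x B)
    have IH: "sum f (A \<union> B) < l"
      using insert.prems by (intro insert.IH) auto
    show ?case
    proof (cases "x \<in> A")
      case True
      then have "A \<union> insert x B = A \<union> B" by blast
      then show ?thesis using IH by simp
    next
      case False
      have sub: "A \<union> insert x B \<subseteq> U" using \<open>A \<subseteq> U\<close> insert.prems(1) by simp
      have "finite (A \<union> B)" using finite_subset[OF sub \<open>finite U\<close>] by simp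
      then have "sum f (A \<union> insert x B) = f x + sum f (A \<union> B)"
        using False insert.hyps(2) by simp
      also have "\<dots> < h" using insert.prems(2)[of x] IH by simp
      finally show ?thesis using gap[OF sub] by linarith
    qed
  qed
qed

theorem lemma12:
  fixes a :: "nat \<Rightarrow> real"
  assumes mono: "\<And>i j. 1 \<le> i \<Longrightarrow> i \<le> j \<Longrightarrow> j \<le> 14 \<Longrightarrow> a j \<le> a i"
    and nonneg: "a 14 \<ge> 0"
    and sum1: "(\<Sum>i=1..14. a i) = 1"
    and top2: "a 1 + a 2 < 1/2"
    and nosub: "\<And>S. S \<subseteq> {1..14} \<Longrightarrow> \<not> (5/12 \<le> (\<Sum>i\<in>S. a i) \<and> (\<Sum>i\<in>S. a i) \<le> 7/12)"
  shows "a 5 > 1/6 \<and> a 1 + a 2 + (\<Sum>i=6..14. a i) < 5/12"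
proof -
  have top2_below_gap: "sum a {1, 2} < 5/12"
    using nosub[of "{1, 2}"] top2 by auto
  have a5: "a 5 > 1/6"
  proof (rule ccontr)
    assume "\<not> a 5 > 1/6"
    then have "\<And>i. i \<in> {5..14} \<Longrightarrow> a i \<le> 7/12 - 5/12"
      using mono[of 5] by fastforce
    then have "sum a ({1, 2} \<union> {5..14}) < 5/12"
      using top2_below_gap by (intro sum_stays_below_gap[OF _ nosub]) auto
    moreover have "{1..14} - ({1, 2} \<union> {5..14}) = {3, 4::nat}" by auto
    moreover have "a 3 + a 4 \<le> a 1 + a 2" using mono[of 1 3] mono[of 2 4] by simp
    ultimately show False
      using sum.subset_diff[of "{1, 2} \<union> {5..14}" "{1..14}" a] sum1 top2_below_gap by simp
  qed
  have "{1..14} - ({1, 2} \<union> {6..14}) = {3, 4, 5::nat}" by auto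
  moreover have "a 3 + a 4 + a 5 > 1/2" using a5 mono[of 3 5] mono[of 4 5] by simp
  ultimately have "sum a ({1, 2} \<union> {6..14}) < 1/2"
    using sum.subset_diff[of "{1, 2} \<union> {6..14}" "{1..14}" a] sum1 by simp
  then have "sum a ({1, 2} \<union> {6..14}) < 5/12"
    using nosub[of "{1, 2} \<union> {6..14}"] by auto
  moreover have "sum a ({1, 2} \<union> {6..14}) = a 1 + a 2 + (\<Sum>i=6..14. a i)"
    by (subst sum.union_disjoint) auto
  ultimately show ?thesis using a5 by simp
qed

end
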